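(* Let $u_0 \ge 1$ and $r \ge 1$ be integers with $\gcd(u_0,r)=1$. For an integer $n \ge 1$ define $$k_n := \max\left\{0,\ \left\lfloor \frac{n-u_0}{r+1}\right\rfloor + 1\right\}.$$ Let $a \ge 2$ be any given integer. Then for any integers $\alpha \ge a$, $r \ge a$ and $n \ge 2\alpha r$, we have $n - k_n > (\alpha + a - 2) r$.
   Context: $\lfloor x\rfloor$ denotes the largest integer not exceeding $x$. *)

theory Defs
  imports Complex_Main
begin

definition k_seq :: "int \<Rightarrow> int \<Rightarrow> int \<Rightarrow> int" where
  "k_seq u0 r n = max 0 (\<lfloor>real_of_int (n - u0) / real_of_int (r + 1)\<rfloor> + 1)"

end

theory Submission
  imports Defs
begin

text \<open>Only \<open>u0 \<ge> 1\<close> matters about \<open>u0\<close>: it gives \<open>(r + 1) (k_n - 1) \<le> n - 1\<close>, i.e.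
  \<open>(r + 1) (n - k_n) \<ge> r (n - 1)\<close>. So it suffices that \<open>n - 1 > (\<alpha> + a - 2) (r + 1)\<close>,
  which follows from \<open>n \<ge> 2 \<alpha> r\<close> because
  \<open>2 \<alpha> r - 1 - (\<alpha> + a - 2) (r + 1) = (\<alpha> - a) (r - 1) + 2 (r - a) + 1\<close>.\<close>

lemma k_seq_eq_div: "k_seq u0 r n = max 0 ((n - u0) div (r + 1) + 1)"
  unfolding k_seq_def by (metis floor_divide_of_int_eq of_int_add of_int_1)

lemma k_seq_mult_le:
  fixes u0 r n :: int
  assumes "u0 \<ge> 1" and "r \<ge> 0" and "n \<ge> 1"
  shows "(r + 1) * k_seq u0 r n \<le> n + r"
proof (cases "(n - u0) div (r + 1) + 1 \<le> 0")
  case True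
  then show ?thesis using assms by (simp add: k_seq_eq_div)
next
  case False
  have "(r + 1) * ((n - u0) div (r + 1)) \<le> n - u0"
    using assms(2) by (simp add: pos_mod_sign minus_mod_eq_mult_div [symmetric])
  then show ?thesis using False assms(1) by (simp add: k_seq_eq_div algebra_simps)
qed

lemma n_minus_k_seq_lower_bound:
  fixes u0 r n :: int
  assumes "u0 \<ge> 1" and "r \<ge> 0" and "n \<ge> 1"
  shows "r * (n - 1) \<le> (r + 1) * (n - k_seq u0 r n)"
  using k_seq_mult_le [OF assms] by (simp add: algebra_simps)

lemma shifted_product_less_of_ge_double:
  fixes a \<alpha> r n :: int
  assumes "\<alpha> \<ge> a" and "r \<ge> a" and "r \<ge> 1" and "n \<ge> 2 * \<alpha> * r"
  shows "n - 1 > (\<alpha> + a - 2) * (r + 1)"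
proof -
  have "(\<alpha> - a) * (r - 1) \<ge> 0" using assms by simp
  then have "2 * \<alpha> * r - 1 - (\<alpha> + a - 2) * (r + 1) > 0"
    using assms(2) by (simp add: algebra_simps)
  then show ?thesis using assms(4) by linarith
qed

theorem lemma3p1:
  fixes u0 r a \<alpha> n :: int
  assumes "u0 \<ge> 1" and "r \<ge> 1" and "gcd u0 r = 1"
    and "a \<ge> 2" and "\<alpha> \<ge> a" and "r \<ge> a"
    and "n \<ge> 1" and "n \<ge> 2 * \<alpha> * r"
  shows "n - k_seq u0 r n > (\<alpha> + a - 2) * r"
proof -
  have "(r + 1) * ((\<alpha> + a - 2) * r) = r * ((\<alpha> + a - 2) * (r + 1))"
    by (simp add: algebra_simps)
  also have "\<dots> < r * (n - 1)"
    using shifted_product_less_of_ge_double [OF assms(5,6,2,8)] assms(2) by simp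
  also have "\<dots> \<le> (r + 1) * (n - k_seq u0 r n)"
    using n_minus_k_seq_lower_bound assms(1,2,7) by simp
  finally show ?thesis
    using assms(2) mult_less_cancel_left_pos [of "r + 1"] by simp
qed

end
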